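(* Assume the balanced case $\beta_0=C$, $A>0$ and $\Delta=B^2-4AC>0$, and let $r_{1,2}=\frac{-B\pm\sqrt\Delta}{2A}$ with $r_1<r_2$. Then, as an identity of analytic functions for $t$ near $0$ (principal power, equal to $1$ at $t=0$), \[ w(x,t)=\exp\bigl[(\alpha_0r_1+\gamma_0)t\bigr]\left[\frac{r_1-r_2}{(x-r_2)-(x-r_1)\exp(A(r_1-r_2)t)}\right]^{\alpha_0/A}. \]
   Context: Fix nonnegative integers $a,b,c,\alpha_0,\beta_0,\gamma_0$, $\alpha_k=ak+\alpha_0$, $\beta_k=bk+\beta_0$, $\gamma_k=ck+\gamma_0$; $w_{0,0}=1$, $w_{n,k}=0$ for $k<0$ or $k>n$, $w_{n+1,k}=\alpha_{k-1}w_{n,k-1}+\gamma_k w_{n,k}+\beta_k w_{n,k+1}$. $A=a$, $B=c$, $C=b$; balanced means $\beta_0=C$. $P_n(x)=\sum_k w_{n,k}x^k$, $w(x,t)=\sum_{n\ge0}P_n(x)t^n/n!$. *)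

theory Defs
  imports "HOL-Analysis.Analysis"
begin

text \<open>The triangle w(n,k) with alpha_k = a k + alpha0, beta_k = b k + beta0,
  gamma_k = c k + gamma0; w(0,0)=1, w(n,k)=0 for k<0 or k>n.\<close>

fun wtri :: "nat \<Rightarrow> nat \<Rightarrow> nat \<Rightarrow> nat \<Rightarrow> nat \<Rightarrow> nat \<Rightarrow> nat \<Rightarrow> int \<Rightarrow> int" where
  "wtri a b c al0 be0 ga0 0 k = (if k = 0 then 1 else 0)"
| "wtri a b c al0 be0 ga0 (Suc n) k =
     (if k < 0 \<or> k > int (Suc n) then 0
      else (int a * (k - 1) + int al0) * wtri a b c al0 be0 ga0 n (k - 1)
         + (int c * k + int ga0) * wtri a b c al0 be0 ga0 n k
         + (int b * k + int be0) * wtri a b c al0 be0 ga0 n (k + 1))"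

definition Ppoly :: "nat \<Rightarrow> nat \<Rightarrow> nat \<Rightarrow> nat \<Rightarrow> nat \<Rightarrow> nat \<Rightarrow> nat \<Rightarrow> complex \<Rightarrow> complex" where
  "Ppoly a b c al0 be0 ga0 n x = (\<Sum>k\<le>n. of_int (wtri a b c al0 be0 ga0 n (int k)) * x ^ k)"

end

theory Submission
  imports Defs "HOL-Complex_Analysis.Complex_Analysis"
begin

text \<open>In the balanced case the triangle recurrence is equivalent to the differential recurrence
  \<open>P(n+1) = (a y^2 + c y + b) P(n)' + (al0 y + ga0) P(n)\<close> for the row polynomials. Hence if
  \<open>phi\<close> solves the Riccati equation \<open>phi' = a (phi - r1) (phi - r2)\<close> with \<open>phi(0) = x\<close>, and
  \<open>f' = (al0 phi + ga0) f\<close> with \<open>f(0) = 1\<close>, then induction gives \<open>f^(n) = f P(n)(phi)\<close>, so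
  \<open>f^(n)(0) = P(n)(x)\<close> and \<open>f\<close> is the exponential generating function by Taylor's theorem.
  With \<open>D = (x - r2) - (x - r1) exp (a (r1 - r2) t)\<close> both equations are solved explicitly by
  \<open>phi = r2 + (r1 - r2) (x - r2) / D\<close> and \<open>f = exp ((al0 r1 + ga0) t) ((r1 - r2) / D) powr (al0 / a)\<close>.\<close>

lemma wtri_eq_0_if_neg: "k < 0 \<Longrightarrow> wtri a b c al0 be0 ga0 n k = 0"
  by (cases n) auto

lemma wtri_eq_0_if_gt: "k > int n \<Longrightarrow> wtri a b c al0 be0 ga0 n k = 0"
  by (cases n) auto

definition Ppoly_pderiv ::
    "nat \<Rightarrow> nat \<Rightarrow> nat \<Rightarrow> nat \<Rightarrow> nat \<Rightarrow> nat \<Rightarrow> nat \<Rightarrow> complex \<Rightarrow> complex" where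
  "Ppoly_pderiv a b c al0 be0 ga0 n x =
     (\<Sum>k\<le>n. of_int (wtri a b c al0 be0 ga0 n (int k)) * (of_nat k * x ^ (k - 1)))"

lemma has_field_derivative_Ppoly:
  "(Ppoly a b c al0 be0 ga0 n has_field_derivative Ppoly_pderiv a b c al0 be0 ga0 n x) (at x)"
  unfolding Ppoly_def[abs_def] Ppoly_pderiv_def
  by (auto intro!: derivative_eq_intros DERIV_sum)

lemma Ppoly_0: "Ppoly a b c al0 be0 ga0 0 y = 1"
  by (simp add: Ppoly_def)

lemma Ppoly_rise_sum:
  "(\<Sum>k\<le>Suc n. of_int ((int a * (int k - 1) + int al0) * wtri a b c al0 be0 ga0 n (int k - 1)) * y ^ k)
   = of_nat a * y\<^sup>2 * Ppoly_pderiv a b c al0 be0 ga0 n y + of_nat al0 * y * Ppoly a b c al0 be0 ga0 n y"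
proof -
  let ?w = "wtri a b c al0 be0 ga0 n"
  have "(\<Sum>k\<le>Suc n. of_int ((int a * (int k - 1) + int al0) * ?w (int k - 1)) * y ^ k)
      = (\<Sum>k\<le>n. of_int ((int a * int k + int al0) * ?w (int k)) * y ^ Suc k)"
    by (subst sum.atMost_Suc_shift) (simp add: wtri_eq_0_if_neg)
  also have "\<dots> = (\<Sum>k\<le>n. of_nat a * y\<^sup>2 * (of_int (?w (int k)) * (of_nat k * y ^ (k - 1)))
                        + of_nat al0 * y * (of_int (?w (int k)) * y ^ k))"
    by (intro sum.cong refl, rename_tac k, case_tac k) (auto simp: algebra_simps power2_eq_square)
  finally show ?thesis
    unfolding Ppoly_pderiv_def Ppoly_def by (simp add: sum.distrib sum_distrib_left)
qed

lemma Ppoly_level_sum: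
  "(\<Sum>k\<le>Suc n. of_int ((int c * int k + int ga0) * wtri a b c al0 be0 ga0 n (int k)) * y ^ k)
   = of_nat c * y * Ppoly_pderiv a b c al0 be0 ga0 n y + of_nat ga0 * Ppoly a b c al0 be0 ga0 n y"
proof -
  let ?w = "wtri a b c al0 be0 ga0 n"
  have "(\<Sum>k\<le>Suc n. of_int ((int c * int k + int ga0) * ?w (int k)) * y ^ k)
      = (\<Sum>k\<le>n. of_nat c * y * (of_int (?w (int k)) * (of_nat k * y ^ (k - 1)))
                 + of_nat ga0 * (of_int (?w (int k)) * y ^ k))"
    by (simp add: wtri_eq_0_if_gt, intro sum.cong refl, rename_tac k, case_tac k) (auto simp: algebra_simps)
  then show ?thesis
    unfolding Ppoly_pderiv_def Ppoly_def by (simp add: sum.distrib sum_distrib_left)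
qed

lemma Ppoly_fall_sum:
  "(\<Sum>k\<le>Suc n. of_int ((int b * int k + int b) * wtri a b c al0 be0 ga0 n (int k + 1)) * y ^ k)
   = of_nat b * Ppoly_pderiv a b c al0 be0 ga0 n y"
proof -
  let ?h = "\<lambda>k. of_int (wtri a b c al0 be0 ga0 n (int k)) * (of_nat k * y ^ (k - 1)) :: complex"
  have "Ppoly_pderiv a b c al0 be0 ga0 n y = (\<Sum>k\<le>Suc (Suc n). ?h k)"
    unfolding Ppoly_pderiv_def by (simp add: wtri_eq_0_if_gt)
  also have "\<dots> = (\<Sum>k\<le>Suc n. ?h (Suc k))"
    by (subst sum.atMost_Suc_shift) simp
  finally have "of_nat b * Ppoly_pderiv a b c al0 be0 ga0 n y = of_nat b * (\<Sum>k\<le>Suc n. ?h (Suc k))"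
    by (rule arg_cong)
  also have "\<dots> = (\<Sum>k\<le>Suc n. of_int ((int b * int k + int b) * wtri a b c al0 be0 ga0 n (int k + 1)) * y ^ k)"
    unfolding sum_distrib_left by (intro sum.cong refl) (simp add: algebra_simps)
  finally show ?thesis ..
qed

lemma Ppoly_Suc:
  assumes "be0 = b"
  shows "Ppoly a b c al0 be0 ga0 (Suc n) y =
    (of_nat a * y\<^sup>2 + of_nat c * y + of_nat b) * Ppoly_pderiv a b c al0 be0 ga0 n y
    + (of_nat al0 * y + of_nat ga0) * Ppoly a b c al0 be0 ga0 n y"
proof -
  let ?w = "wtri a b c al0 be0 ga0 n"
  have "Ppoly a b c al0 be0 ga0 (Suc n) y =
     (\<Sum>k\<le>Suc n. of_int ((int a * (int k - 1) + int al0) * ?w (int k - 1)) * y ^ k)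
   + (\<Sum>k\<le>Suc n. of_int ((int c * int k + int ga0) * ?w (int k)) * y ^ k)
   + (\<Sum>k\<le>Suc n. of_int ((int b * int k + int b) * ?w (int k + 1)) * y ^ k)"
    unfolding Ppoly_def using assms by (simp add: sum.distrib[symmetric] algebra_simps)
  then show ?thesis
    unfolding Ppoly_rise_sum Ppoly_level_sum Ppoly_fall_sum by (simp add: algebra_simps)
qed

lemma higher_deriv_eq_mult_comp_flow:
  fixes f \<phi> g q :: "complex \<Rightarrow> complex" and P P' :: "nat \<Rightarrow> complex \<Rightarrow> complex"
  assumes "open S"
    and f: "\<And>t. t \<in> S \<Longrightarrow> (f has_field_derivative f t * g (\<phi> t)) (at t)"
    and \<phi>: "\<And>t. t \<in> S \<Longrightarrow> (\<phi> has_field_derivative q (\<phi> t)) (at t)"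
    and P': "\<And>n y. (P n has_field_derivative P' n y) (at y)"
    and P_0: "\<And>y. P 0 y = 1"
    and P_Suc: "\<And>n y. P (Suc n) y = q y * P' n y + g y * P n y"
  shows "t \<in> S \<Longrightarrow> (deriv ^^ n) f t = f t * P n (\<phi> t)"
proof (induction n arbitrary: t)
  case 0
  then show ?case by (simp add: P_0)
next
  case (Suc n)
  have "((\<lambda>u. f u * P n (\<phi> u)) has_field_derivative
          f t * (P' n (\<phi> t) * q (\<phi> t)) + f t * g (\<phi> t) * P n (\<phi> t)) (at t)"
    using DERIV_mult'[OF f DERIV_chain2[OF P' \<phi>]] Suc.prems by simp
  then have "((\<lambda>u. f u * P n (\<phi> u)) has_field_derivative f t * P (Suc n) (\<phi> t)) (at t)"
    by (simp add: P_Suc algebra_simps)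
  then have "((deriv ^^ n) f has_field_derivative f t * P (Suc n) (\<phi> t)) (at t)"
    by (rule has_field_derivative_transform_within_open[OF _ \<open>open S\<close> Suc.prems])
       (simp add: Suc.IH)
  then show ?case
    by (simp add: DERIV_imp_deriv)
qed

lemma mult_comp_flow_sums:
  fixes f \<phi> g q :: "complex \<Rightarrow> complex" and P P' :: "nat \<Rightarrow> complex \<Rightarrow> complex"
  assumes f: "\<And>t. t \<in> ball 0 \<epsilon> \<Longrightarrow> (f has_field_derivative f t * g (\<phi> t)) (at t)"
    and \<phi>: "\<And>t. t \<in> ball 0 \<epsilon> \<Longrightarrow> (\<phi> has_field_derivative q (\<phi> t)) (at t)"
    and P': "\<And>n y. (P n has_field_derivative P' n y) (at y)"
    and P_0: "\<And>y. P 0 y = 1"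
    and P_Suc: "\<And>n y. P (Suc n) y = q y * P' n y + g y * P n y"
    and "f 0 = 1" "\<phi> 0 = x" "norm t < \<epsilon>"
  shows "(\<lambda>n. P n x * t ^ n / fact n) sums f t"
proof -
  have "f holomorphic_on ball 0 \<epsilon>"
    unfolding holomorphic_on_open[OF open_ball] using f by blast
  then have "(\<lambda>n. (deriv ^^ n) f 0 / fact n * (t - 0) ^ n) sums f t"
    by (rule holomorphic_power_series) (simp add: \<open>norm t < \<epsilon>\<close>)
  moreover have "(deriv ^^ n) f 0 = P n x" for n
  proof -
    have "0 \<in> ball 0 \<epsilon>"
      using \<open>norm t < \<epsilon>\<close> norm_ge_zero[of t] by (simp del: norm_ge_zero)
    have "(deriv ^^ n) f 0 = f 0 * P n (\<phi> 0)"
      by (rule higher_deriv_eq_mult_comp_flow[where S = "ball 0 \<epsilon>" and \<phi> = \<phi> and g = g and q = q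
            and P' = P'])
         (use f \<phi> P' P_0 P_Suc \<open>0 \<in> ball 0 \<epsilon>\<close> in auto)
    with \<open>f 0 = 1\<close> \<open>\<phi> 0 = x\<close> show ?thesis
      by simp
  qed
  ultimately show ?thesis
    by simp
qed

lemma riccati_flow_has_derivative:
  fixes A r1 r2 x t :: complex
  defines "D \<equiv> \<lambda>t. (x - r2) - (x - r1) * exp (A * (r1 - r2) * t)"
  defines "\<phi> \<equiv> \<lambda>t. r2 + (r1 - r2) * (x - r2) / D t"
  assumes "D t \<noteq> 0"
  shows "(\<phi> has_field_derivative A * (\<phi> t - r1) * (\<phi> t - r2)) (at t)"
proof -
  have "\<phi> t - r1 = (r1 - r2) * (x - r1) * exp (A * (r1 - r2) * t) / D t"
    using assms(3) unfolding \<phi>_def by (simp add: field_simps D_def)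
  moreover have "\<phi> t - r2 = (r1 - r2) * (x - r2) / D t"
    unfolding \<phi>_def by simp
  ultimately show ?thesis
    using assms(3) unfolding \<phi>_def D_def
    by (auto intro!: derivative_eq_intros simp: power2_eq_square field_simps)
qed

lemma riccati_weight_has_derivative:
  fixes A r1 r2 x t al ga :: complex
  defines "E \<equiv> \<lambda>t. exp (A * (r1 - r2) * t)"
  defines "D \<equiv> \<lambda>t. (x - r2) - (x - r1) * E t"
  defines "\<phi> \<equiv> \<lambda>t. r2 + (r1 - r2) * (x - r2) / D t"
  defines "f \<equiv> \<lambda>t. exp ((al * r1 + ga) * t + al / A * Ln ((r1 - r2) / D t))"
  assumes "A \<noteq> 0" "r1 \<noteq> r2" and not_nonpos: "(r1 - r2) / D t \<notin> \<real>\<^sub>\<le>\<^sub>0"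
  shows "(f has_field_derivative f t * (al * \<phi> t + ga)) (at t)"
proof -
  have "D t \<noteq> 0"
    using not_nonpos by auto
  have "(E has_field_derivative A * (r1 - r2) * E t) (at t)"
    unfolding E_def by (auto intro!: derivative_eq_intros)
  then have "(D has_field_derivative (r1 - x) * (A * (r1 - r2) * E t)) (at t)"
    unfolding D_def by (auto intro!: derivative_eq_intros simp: algebra_simps)
  then have "((\<lambda>t. (r1 - r2) / D t) has_field_derivative
      (r1 - r2) * (x - r1) * (A * (r1 - r2) * E t) / (D t)\<^sup>2) (at t)"
    using \<open>D t \<noteq> 0\<close> by (auto intro!: derivative_eq_intros simp: power2_eq_square field_simps)
  from DERIV_chain2[OF has_field_derivative_Ln[OF not_nonpos] this]
  have "((\<lambda>t. Ln ((r1 - r2) / D t)) has_field_derivative A * (r1 - r2) * (x - r1) * E t / D t) (at t)"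
  proof (rule DERIV_cong)
    show "inverse ((r1 - r2) / D t) * ((r1 - r2) * (x - r1) * (A * (r1 - r2) * E t) / (D t)\<^sup>2)
        = A * (r1 - r2) * (x - r1) * E t / D t"
      using \<open>D t \<noteq> 0\<close> \<open>r1 \<noteq> r2\<close> by (simp add: power2_eq_square field_simps)
  qed
  from DERIV_add[OF DERIV_cmult_right[OF DERIV_ident, of "al * r1 + ga"] DERIV_cmult[OF this, of "al / A"]]
  have "((\<lambda>t. (al * r1 + ga) * t + al / A * Ln ((r1 - r2) / D t)) has_field_derivative
      al * (r1 + (r1 - r2) * (x - r1) * E t / D t) + ga) (at t)"
    using \<open>A \<noteq> 0\<close> by (simp add: algebra_simps)
  also have "r1 + (r1 - r2) * (x - r1) * E t / D t = \<phi> t"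
    using \<open>D t \<noteq> 0\<close> unfolding \<phi>_def by (simp add: field_simps D_def)
  finally show ?thesis
    unfolding f_def by (rule DERIV_chain2[OF DERIV_exp, THEN DERIV_cong]) (simp add: mult.commute)
qed

lemma isCont_ball_not_nonpos_Reals:
  fixes h :: "complex \<Rightarrow> complex"
  assumes "isCont h z" "h z \<notin> \<real>\<^sub>\<le>\<^sub>0"
  obtains \<epsilon> where "\<epsilon> > 0" "\<And>t. t \<in> ball z \<epsilon> \<Longrightarrow> h t \<notin> \<real>\<^sub>\<le>\<^sub>0"
proof -
  have "open (- \<real>\<^sub>\<le>\<^sub>0 :: complex set)"
    using closed_nonpos_Reals_complex by (simp add: open_Compl)
  then obtain s where "open s" "z \<in> s" "\<And>t. t \<in> s \<Longrightarrow> h t \<notin> \<real>\<^sub>\<le>\<^sub>0"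
    using assms continuous_at_open by (metis ComplI ComplD)
  then show ?thesis
    using that by (meson open_contains_ball subset_iff)
qed

lemma Ppoly_egf_closed_form:
  fixes r1 r2 x :: complex
  assumes balanced: "be0 = b" and "a > 0" "r1 \<noteq> r2"
    and factor: "\<And>y. of_nat a * y\<^sup>2 + of_nat c * y + of_nat b = of_nat a * (y - r1) * (y - r2)"
  shows "\<exists>\<epsilon>>0. \<forall>t. norm t < \<epsilon> \<longrightarrow>
    (\<lambda>n. Ppoly a b c al0 be0 ga0 n x * t ^ n / of_nat (fact n)) sums
      (exp ((of_nat al0 * r1 + of_nat ga0) * t) *
       ((r1 - r2) / ((x - r2) - (x - r1) * exp (of_nat a * (r1 - r2) * t)))
         powr (of_nat al0 / of_nat a))" (is "\<exists>\<epsilon>>0. \<forall>t. _ \<longrightarrow> ?expansion t")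
proof -
  define D where "D t = (x - r2) - (x - r1) * exp (of_nat a * (r1 - r2) * t)" for t
  define \<phi> where "\<phi> t = r2 + (r1 - r2) * (x - r2) / D t" for t
  define f where "f t = exp ((of_nat al0 * r1 + of_nat ga0) * t
                           + of_nat al0 / of_nat a * Ln ((r1 - r2) / D t))" for t
  have "D 0 = r1 - r2"
    unfolding D_def by simp
  then have "isCont (\<lambda>t. (r1 - r2) / D t) 0"
    using \<open>r1 \<noteq> r2\<close> unfolding D_def by (intro continuous_intros) auto
  moreover have "(r1 - r2) / D 0 \<notin> \<real>\<^sub>\<le>\<^sub>0"
    using \<open>D 0 = r1 - r2\<close> \<open>r1 \<noteq> r2\<close> by simp
  ultimately obtain \<epsilon> where "\<epsilon> > 0"
    and not_nonpos: "\<And>t. t \<in> ball 0 \<epsilon> \<Longrightarrow> (r1 - r2) / D t \<notin> \<real>\<^sub>\<le>\<^sub>0"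
    by (rule isCont_ball_not_nonpos_Reals) auto
  then have D_nonzero: "D t \<noteq> 0" if "t \<in> ball 0 \<epsilon>" for t
    using that by fastforce
  have df: "(f has_field_derivative f t * (of_nat al0 * \<phi> t + of_nat ga0)) (at t)"
    if "t \<in> ball 0 \<epsilon>" for t
    using riccati_weight_has_derivative[of "of_nat a" r1 r2 x t] not_nonpos[OF that]
      \<open>a > 0\<close> \<open>r1 \<noteq> r2\<close>
    unfolding f_def \<phi>_def D_def by simp
  have d\<phi>: "(\<phi> has_field_derivative of_nat a * (\<phi> t)\<^sup>2 + of_nat c * \<phi> t + of_nat b) (at t)"
    if "t \<in> ball 0 \<epsilon>" for t
    using riccati_flow_has_derivative[of x r2 r1 "of_nat a" t] D_nonzero[OF that]
    unfolding factor \<phi>_def D_def by (simp add: mult.assoc)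
  have "f 0 = 1" "\<phi> 0 = x"
    using \<open>D 0 = r1 - r2\<close> \<open>r1 \<noteq> r2\<close> by (simp_all add: f_def \<phi>_def)
  show ?thesis
  proof (intro exI conjI allI impI)
    fix t :: complex
    assume "norm t < \<epsilon>"
    have "(\<lambda>n. Ppoly a b c al0 be0 ga0 n x * t ^ n / fact n) sums f t"
      by (rule mult_comp_flow_sums[where \<epsilon> = \<epsilon> and x = x and f = f and \<phi> = \<phi>
            and P = "Ppoly a b c al0 be0 ga0" and P' = "Ppoly_pderiv a b c al0 be0 ga0"
            and g = "\<lambda>y. of_nat al0 * y + of_nat ga0"
            and q = "\<lambda>y. of_nat a * y\<^sup>2 + of_nat c * y + of_nat b"])
         (use df d\<phi> \<open>f 0 = 1\<close> \<open>\<phi> 0 = x\<close> \<open>norm t < \<epsilon>\<close> in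
           \<open>auto intro: has_field_derivative_Ppoly simp: Ppoly_0 Ppoly_Suc[OF balanced]\<close>)
    moreover have "f t = exp ((of_nat al0 * r1 + of_nat ga0) * t) * ((r1 - r2) / D t) powr (of_nat al0 / of_nat a)"
      using not_nonpos[of t] \<open>norm t < \<epsilon>\<close> by (auto simp: f_def powr_def exp_add mult.commute)
    ultimately show "?expansion t"
      by (simp add: D_def)
  qed (rule \<open>\<epsilon> > 0\<close>)
qed

lemma quadratic_eq_mult_roots:
  fixes A B C :: real and y :: "'a :: real_field"
  assumes "A \<noteq> 0" "B\<^sup>2 - 4 * A * C \<ge> 0"
  defines "r1 \<equiv> (- B - sqrt (B\<^sup>2 - 4 * A * C)) / (2 * A)"
    and "r2 \<equiv> (- B + sqrt (B\<^sup>2 - 4 * A * C)) / (2 * A)"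
  shows "of_real A * y\<^sup>2 + of_real B * y + of_real C = of_real A * (y - of_real r1) * (y - of_real r2)"
proof -
  have "A * r1 * r2 = C" "A * (r1 + r2) = - B"
    using assms(1,2) unfolding r1_def r2_def by (auto simp: field_simps power2_eq_square)
  moreover have "of_real A * (y - of_real r1) * (y - of_real r2)
      = of_real A * y\<^sup>2 - of_real (A * (r1 + r2)) * y + of_real (A * r1 * r2)"
    by (simp add: algebra_simps power2_eq_square)
  ultimately show ?thesis
    by simp
qed

theorem mainTheorem7:
  fixes a b c al0 be0 ga0 :: nat
  assumes balanced: "be0 = b"
    and Apos: "a > 0"
    and Delta: "real c ^ 2 - 4 * real a * real b > 0"
  defines "r1 \<equiv> (- real c - sqrt (real c ^ 2 - 4 * real a * real b)) / (2 * real a)"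
    and "r2 \<equiv> (- real c + sqrt (real c ^ 2 - 4 * real a * real b)) / (2 * real a)"
  shows "\<forall>x::complex. \<exists>\<epsilon>>0. \<forall>t::complex. norm t < \<epsilon> \<longrightarrow>
     (\<lambda>n. Ppoly a b c al0 be0 ga0 n x * t ^ n / of_nat (fact n)) sums
       (exp (complex_of_real (real al0 * r1 + real ga0) * t) *
        ((complex_of_real (r1 - r2) /
          ((x - complex_of_real r2) - (x - complex_of_real r1) * exp (complex_of_real (real a * (r1 - r2)) * t)))
         powr complex_of_real (real al0 / real a)))"
proof -
  have "r1 \<noteq> r2"
    using Apos Delta unfolding r1_def r2_def by (simp add: field_simps)
  have factor: "of_nat a * y\<^sup>2 + of_nat c * y + of_nat b = of_nat a * (y - of_real r1) * (y - of_real r2)"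
    for y :: complex
    using quadratic_eq_mult_roots[of "real a" "real c" "real b" y] Apos Delta
    unfolding r1_def r2_def by simp
  show ?thesis
    using Ppoly_egf_closed_form[OF balanced Apos _ factor] \<open>r1 \<noteq> r2\<close> by simp
qed

end
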